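(* If $\mathscr{S}$ is a relaxed scenario, then $G_{=}(\mathscr{S})$ is a perfect graph.
   Context: All trees are planted phylogenetic trees: a tree $T$ has a distinguished vertex $0_T$ of degree $1$ whose unique neighbor $\rho_T$ is the root, and every vertex other than $0_T$ and the leaves $L(T)$ has at least two children. For $x,y\in V(T)$ write $y\preceq_T x$ if $x$ lies on the path from $0_T$ to $y$; edges are written $uv$ with $v\prec_T u$. $\mathrm{lca}_T$ denotes the last common ancestor. A time map for $T$ is $\tau_T\colon V(T)\to\mathbb{R}$ with $\tau_T(x)<\tau_T(y)$ whenever $x\prec_T y$. A relaxed scenario $\mathscr{S}=(T,S,\sigma,\mu,\tau_T,\tau_S)$ consists of a gene tree $T$ with time map $\tau_T$, a species tree $S$ with time map $\tau_S$, a map $\sigma\colon L(T)\to M$ with $M\subseteq L(S)$, and a map $\mu\colon V(T)\to V(S)\cup E(S)$ such that (S0) $\mu(x)=0_S$ iff $x=0_T$; (S1) $\mu(x)\in L(S)$ iff $x\in L(T)$, in which case $\mu(x)=\sigma(x)$; (S2) if $\mu(x)\in V(S)$ then $\tau_S(\mu(x))=\tau_T(x)$; (S3) if $\mu(x)=uv\in E(S)$ then $\tau_S(v)<\tau_T(x)<\tau_S(u)$. The EDT graph $G_{=}(\mathscr{S})$ has vertex set $L(T)$ and an edge $xy$ ($x\ne y$) iff $\tau_T(\mathrm{lca}_T(x,y))=\tau_S(\mathrm{lca}_S(\sigma(x),\sigma(y)))$. *)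

theory Defs
  imports Main "HOL.Real"
begin

text \<open>A tree is given by a vertex set V, a set E of directed edges (u,v) with v a child
of u, and the planting vertex r (= 0_T).\<close>

definition children :: "('a \<times> 'a) set \<Rightarrow> 'a \<Rightarrow> 'a set" where
  "children E u = {v. (u, v) \<in> E}"

definition leaves :: "'a set \<Rightarrow> ('a \<times> 'a) set \<Rightarrow> 'a set" where
  "leaves V E = {v \<in> V. children E v = {}}"

definition planted_phylo_tree :: "'a set \<Rightarrow> ('a \<times> 'a) set \<Rightarrow> 'a \<Rightarrow> bool" where
  "planted_phylo_tree V E r \<longleftrightarrow>
     finite V \<and> r \<in> V \<and> E \<subseteq> V \<times> V \<and>
     (\<forall>u. (u, r) \<notin> E) \<and>
     (\<forall>v\<in>V. v \<noteq> r \<longrightarrow> (\<exists>!u. (u, v) \<in> E)) \<and>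
     (\<forall>v\<in>V. (r, v) \<in> E\<^sup>*) \<and>
     card (children E r) = 1 \<and>
     (\<forall>v\<in>V. v \<noteq> r \<and> v \<notin> leaves V E \<longrightarrow> card (children E v) \<ge> 2)"

text \<open>y \<preceq> x  iff x lies on the path from the planting vertex to y.\<close>
definition anc_le :: "('a \<times> 'a) set \<Rightarrow> 'a \<Rightarrow> 'a \<Rightarrow> bool" where
  "anc_le E y x \<longleftrightarrow> (x, y) \<in> E\<^sup>*"

definition anc_less :: "('a \<times> 'a) set \<Rightarrow> 'a \<Rightarrow> 'a \<Rightarrow> bool" where
  "anc_less E y x \<longleftrightarrow> (x, y) \<in> E\<^sup>+"

definition lca :: "'a set \<Rightarrow> ('a \<times> 'a) set \<Rightarrow> 'a \<Rightarrow> 'a \<Rightarrow> 'a" where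
  "lca V E x y = (THE z. z \<in> V \<and> anc_le E x z \<and> anc_le E y z \<and>
       (\<forall>w\<in>V. anc_le E x w \<and> anc_le E y w \<longrightarrow> anc_le E z w))"

definition time_map :: "'a set \<Rightarrow> ('a \<times> 'a) set \<Rightarrow> ('a \<Rightarrow> real) \<Rightarrow> bool" where
  "time_map V E \<tau> \<longleftrightarrow> (\<forall>x\<in>V. \<forall>y\<in>V. anc_less E x y \<longrightarrow> \<tau> x < \<tau> y)"

text \<open>mu maps gene-tree vertices to species-tree vertices (Inl v) or edges (Inr (u,v)).\<close>

definition relaxed_scenario ::
  "'a set \<Rightarrow> ('a \<times> 'a) set \<Rightarrow> 'a \<Rightarrow> 'b set \<Rightarrow> ('b \<times> 'b) set \<Rightarrow> 'b \<Rightarrow>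
   ('a \<Rightarrow> 'b) \<Rightarrow> ('a \<Rightarrow> 'b + ('b \<times> 'b)) \<Rightarrow> ('a \<Rightarrow> real) \<Rightarrow> ('b \<Rightarrow> real) \<Rightarrow> bool" where
  "relaxed_scenario VT ET rT VS ES rS \<sigma> \<mu> \<tau>T \<tau>S \<longleftrightarrow>
     planted_phylo_tree VT ET rT \<and> planted_phylo_tree VS ES rS \<and>
     time_map VT ET \<tau>T \<and> time_map VS ES \<tau>S \<and>
     (\<forall>x\<in>leaves VT ET. \<sigma> x \<in> leaves VS ES) \<and>
     (\<forall>x\<in>VT. \<mu> x \<in> Inl ` VS \<union> Inr ` ES) \<and>
     (\<forall>x\<in>VT. \<mu> x = Inl rS \<longleftrightarrow> x = rT) \<and>
     (\<forall>x\<in>VT. (\<exists>v\<in>leaves VS ES. \<mu> x = Inl v) \<longleftrightarrow> x \<in> leaves VT ET) \<and>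
     (\<forall>x\<in>leaves VT ET. \<mu> x = Inl (\<sigma> x)) \<and>
     (\<forall>x\<in>VT. \<forall>v. \<mu> x = Inl v \<longrightarrow> \<tau>S v = \<tau>T x) \<and>
     (\<forall>x\<in>VT. \<forall>u v. \<mu> x = Inr (u, v) \<longrightarrow> \<tau>S v < \<tau>T x \<and> \<tau>T x < \<tau>S u)"

definition edt_adj ::
  "'a set \<Rightarrow> ('a \<times> 'a) set \<Rightarrow> 'b set \<Rightarrow> ('b \<times> 'b) set \<Rightarrow>
   ('a \<Rightarrow> 'b) \<Rightarrow> ('a \<Rightarrow> real) \<Rightarrow> ('b \<Rightarrow> real) \<Rightarrow> 'a \<Rightarrow> 'a \<Rightarrow> bool" where
  "edt_adj VT ET VS ES \<sigma> \<tau>T \<tau>S x y \<longleftrightarrow>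
     x \<noteq> y \<and> \<tau>T (lca VT ET x y) = \<tau>S (lca VS ES (\<sigma> x) (\<sigma> y))"

text \<open>A (finite, simple) graph is given by a vertex set V and a symmetric adjacency predicate.\<close>

definition is_clique :: "'a set \<Rightarrow> ('a \<Rightarrow> 'a \<Rightarrow> bool) \<Rightarrow> 'a set \<Rightarrow> bool" where
  "is_clique V adj C \<longleftrightarrow> C \<subseteq> V \<and> (\<forall>x\<in>C. \<forall>y\<in>C. x \<noteq> y \<longrightarrow> adj x y)"

definition clique_number :: "'a set \<Rightarrow> ('a \<Rightarrow> 'a \<Rightarrow> bool) \<Rightarrow> nat" where
  "clique_number V adj = Max {card C | C. is_clique V adj C}"

definition is_colouring :: "'a set \<Rightarrow> ('a \<Rightarrow> 'a \<Rightarrow> bool) \<Rightarrow> nat \<Rightarrow> ('a \<Rightarrow> nat) \<Rightarrow> bool" where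
  "is_colouring V adj k f \<longleftrightarrow>
     (\<forall>x\<in>V. f x < k) \<and> (\<forall>x\<in>V. \<forall>y\<in>V. x \<noteq> y \<and> adj x y \<longrightarrow> f x \<noteq> f y)"

definition chromatic_number :: "'a set \<Rightarrow> ('a \<Rightarrow> 'a \<Rightarrow> bool) \<Rightarrow> nat" where
  "chromatic_number V adj = (LEAST k. \<exists>f. is_colouring V adj k f)"

definition perfect_graph :: "'a set \<Rightarrow> ('a \<Rightarrow> 'a \<Rightarrow> bool) \<Rightarrow> bool" where
  "perfect_graph V adj \<longleftrightarrow>
     finite V \<and> (\<forall>W\<subseteq>V. chromatic_number W adj = clique_number W adj)"

end

theory Submission
  imports Defs
begin

text \<open>Write d1 x y = \<tau>T (lca x y) and d2 x y = \<tau>S (lca (\<sigma> x) (\<sigma> y)). Both satisfy the strong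
  triangle inequality on the leaves of T, and G= joins x \<noteq> y iff d1 x y = d2 x y.
  A graph is perfect if every induced subgraph has an independent set meeting all its
  maximum cliques, and such a set is found by induction. Let t be the largest value of d1 or
  d2 on W. The d1-balls and the d2-balls of radius t arrange W in rows and columns: vertices
  in distinct rows and columns have d1 = d2 = t and are adjacent, vertices sharing exactly one
  line are not. So maximum cliques of W consist of maximum cliques of the cells of a
  maximum-weight matching of occupied cells, and an alternating-path argument shows that
  some row or column meets every such matching. The independent sets of the cells on that
  line combine to the required set.\<close>

section \<open>Last common ancestors\<close>

lemma ancestors_comparable:
  assumes "planted_phylo_tree V E r"
  shows "(a, v) \<in> E\<^sup>* \<Longrightarrow> (b, v) \<in> E\<^sup>* \<Longrightarrow> (a, b) \<in> E\<^sup>* \<or> (b, a) \<in> E\<^sup>*"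
proof (induction arbitrary: b rule: rtrancl_induct)
  case base
  then show ?case by simp
next
  case (step u v)
  from step.prems show ?case
  proof (cases rule: rtranclE)
    case base
    then show ?thesis using step.hyps by auto
  next
    case (step u')
    have "v \<in> V" "v \<noteq> r"
      using assms \<open>(u, v) \<in> E\<close> unfolding planted_phylo_tree_def by auto
    then have "u' = u"
      using assms \<open>(u, v) \<in> E\<close> \<open>(u', v) \<in> E\<close> unfolding planted_phylo_tree_def by blast
    then show ?thesis using step.IH \<open>(b, u') \<in> E\<^sup>*\<close> by auto
  qed
qed

lemma time_map_mono:
  assumes "time_map V E \<tau>" "x \<in> V" "y \<in> V" "(y, x) \<in> E\<^sup>*"
  shows "\<tau> x \<le> \<tau> y"
proof (cases "x = y")
  case False
  then have "(y, x) \<in> E\<^sup>+" using assms(4) by (simp add: rtrancl_eq_or_trancl)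
  then show ?thesis using assms unfolding time_map_def anc_less_def by fastforce
qed simp

lemma time_map_antisym:
  assumes "time_map V E \<tau>" "a \<in> V" "(a, b) \<in> E\<^sup>*" "(b, a) \<in> E\<^sup>*"
  shows "a = b"
proof (rule ccontr)
  assume "a \<noteq> b"
  then have "(a, b) \<in> E\<^sup>+" using assms(3) by (simp add: rtrancl_eq_or_trancl)
  then have "(a, a) \<in> E\<^sup>+" using assms(4) by (rule trancl_rtrancl_trancl)
  then show False using assms(1,2) unfolding time_map_def anc_less_def by fastforce
qed

text \<open>The last common ancestor exists: it is the common ancestor of least time, and any two
  common ancestors are comparable.\<close>

lemma lca:
  assumes T: "planted_phylo_tree V E r" and tm: "time_map V E \<tau>" and "x \<in> V" "y \<in> V"
  shows lca_in_V: "lca V E x y \<in> V"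
    and lca_anc_left: "(lca V E x y, x) \<in> E\<^sup>*"
    and lca_anc_right: "(lca V E x y, y) \<in> E\<^sup>*"
    and lca_greatest:
      "\<And>w. w \<in> V \<Longrightarrow> (w, x) \<in> E\<^sup>* \<Longrightarrow> (w, y) \<in> E\<^sup>* \<Longrightarrow> (w, lca V E x y) \<in> E\<^sup>*"
proof -
  define CA where "CA = {z \<in> V. (z, x) \<in> E\<^sup>* \<and> (z, y) \<in> E\<^sup>*}"
  have "finite CA" "r \<in> CA"
    using T \<open>x \<in> V\<close> \<open>y \<in> V\<close> unfolding CA_def planted_phylo_tree_def by auto
  then have "Min (\<tau> ` CA) \<in> \<tau> ` CA" by (intro Min_in) auto
  then obtain z where z: "z \<in> CA" "\<tau> z = Min (\<tau> ` CA)" by auto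
  have below_z: "(w, z) \<in> E\<^sup>*" if "w \<in> CA" for w
  proof -
    have "(w, z) \<in> E\<^sup>* \<or> (z, w) \<in> E\<^sup>*"
      using ancestors_comparable[OF T] that z(1) unfolding CA_def by blast
    moreover have "(z, w) \<notin> E\<^sup>+"
    proof
      assume "(z, w) \<in> E\<^sup>+"
      then have "\<tau> w < \<tau> z" using tm that z(1) unfolding time_map_def anc_less_def CA_def by auto
      moreover have "\<tau> z \<le> \<tau> w" using z that \<open>finite CA\<close> by auto
      ultimately show False by simp
    qed
    ultimately show ?thesis by (auto simp: rtrancl_eq_or_trancl)
  qed
  define Q where "Q z \<longleftrightarrow> z \<in> V \<and> anc_le E x z \<and> anc_le E y z \<and>
       (\<forall>w\<in>V. anc_le E x w \<and> anc_le E y w \<longrightarrow> anc_le E z w)" for z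
  have "Q z" using z(1) below_z unfolding Q_def CA_def anc_le_def by auto
  moreover have "z' = z" if "Q z'" for z'
    using that \<open>Q z\<close> time_map_antisym[OF tm] unfolding Q_def anc_le_def by blast
  ultimately have "Q (lca V E x y)"
    unfolding lca_def Q_def[symmetric] by (rule theI)
  then show "lca V E x y \<in> V" "(lca V E x y, x) \<in> E\<^sup>*" "(lca V E x y, y) \<in> E\<^sup>*"
    "\<And>w. w \<in> V \<Longrightarrow> (w, x) \<in> E\<^sup>* \<Longrightarrow> (w, y) \<in> E\<^sup>* \<Longrightarrow> (w, lca V E x y) \<in> E\<^sup>*"
    unfolding Q_def anc_le_def by auto
qed

lemma lca_commute: "lca V E x y = lca V E y x"
  unfolding lca_def by (simp add: conj_commute conj_left_commute)

definition ultrametric_on :: "'a set \<Rightarrow> ('a \<Rightarrow> 'a \<Rightarrow> real) \<Rightarrow> bool" where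
  "ultrametric_on A d \<longleftrightarrow>
     (\<forall>x\<in>A. \<forall>y\<in>A. d x y = d y x) \<and>
     (\<forall>x\<in>A. \<forall>y\<in>A. \<forall>z\<in>A. d x z \<le> max (d x y) (d y z))"

lemma ultrametric_on_compose:
  assumes "ultrametric_on B d" "f ` A \<subseteq> B"
  shows "ultrametric_on A (\<lambda>x y. d (f x) (f y))"
  using assms unfolding ultrametric_on_def by (simp add: image_subset_iff)

lemma time_lca_le:
  assumes T: "planted_phylo_tree V E r" and tm: "time_map V E \<tau>" and "x \<in> V" "z \<in> V"
    and w: "w \<in> V" "(w, x) \<in> E\<^sup>*" "(w, z) \<in> E\<^sup>*"
  shows "\<tau> (lca V E x z) \<le> \<tau> w"
proof -
  have "(w, lca V E x z) \<in> E\<^sup>*" using lca_greatest[OF T tm \<open>x \<in> V\<close> \<open>z \<in> V\<close> w] .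
  then show ?thesis by (rule time_map_mono[OF tm lca_in_V[OF T tm \<open>x \<in> V\<close> \<open>z \<in> V\<close>] w(1)])
qed

text \<open>Both lca x y and lca y z are ancestors of y, hence comparable; the higher one is a common
  ancestor of x and z.\<close>

lemma time_lca_ultrametric:
  assumes T: "planted_phylo_tree V E r" and tm: "time_map V E \<tau>"
  shows "ultrametric_on V (\<lambda>x y. \<tau> (lca V E x y))"
  unfolding ultrametric_on_def
proof (intro conjI ballI)
  fix x y z assume "x \<in> V" "y \<in> V" "z \<in> V"
  define u where "u = lca V E x y"
  define v where "v = lca V E y z"
  have u: "u \<in> V" "(u, x) \<in> E\<^sup>*" "(u, y) \<in> E\<^sup>*"
    unfolding u_def using \<open>x \<in> V\<close> \<open>y \<in> V\<close>
    by (simp_all add: lca_in_V[OF T tm] lca_anc_left[OF T tm] lca_anc_right[OF T tm])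
  have v: "v \<in> V" "(v, y) \<in> E\<^sup>*" "(v, z) \<in> E\<^sup>*"
    unfolding v_def using \<open>y \<in> V\<close> \<open>z \<in> V\<close>
    by (simp_all add: lca_in_V[OF T tm] lca_anc_left[OF T tm] lca_anc_right[OF T tm])
  have "(u, v) \<in> E\<^sup>* \<or> (v, u) \<in> E\<^sup>*" using ancestors_comparable[OF T u(3) v(2)] .
  then show "\<tau> (lca V E x z) \<le> max (\<tau> u) (\<tau> v)"
  proof
    assume "(u, v) \<in> E\<^sup>*"
    then have "(u, z) \<in> E\<^sup>*" using v(3) by (rule rtrancl_trans)
    then have "\<tau> (lca V E x z) \<le> \<tau> u"
      using time_lca_le[OF T tm \<open>x \<in> V\<close> \<open>z \<in> V\<close> u(1,2)] by blast
    then show ?thesis by simp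
  next
    assume "(v, u) \<in> E\<^sup>*"
    then have "(v, x) \<in> E\<^sup>*" using u(2) by (rule rtrancl_trans)
    then have "\<tau> (lca V E x z) \<le> \<tau> v"
      using time_lca_le[OF T tm \<open>x \<in> V\<close> \<open>z \<in> V\<close> v(1) _ v(3)] by blast
    then show ?thesis by simp
  qed
qed (simp add: lca_commute)

section \<open>Independent sets meeting all maximum cliques\<close>

definition independent :: "('a \<Rightarrow> 'a \<Rightarrow> bool) \<Rightarrow> 'a set \<Rightarrow> bool" where
  "independent adj I \<longleftrightarrow> (\<forall>x\<in>I. \<forall>y\<in>I. \<not> adj x y)"

definition meets_max_cliques :: "'a set \<Rightarrow> ('a \<Rightarrow> 'a \<Rightarrow> bool) \<Rightarrow> 'a set \<Rightarrow> bool" where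
  "meets_max_cliques W adj I \<longleftrightarrow>
     (\<forall>C. is_clique W adj C \<and> card C = clique_number W adj \<longrightarrow> C \<inter> I \<noteq> {})"

lemma finite_clique_sizes:
  assumes "finite W"
  shows "finite {card C | C. is_clique W adj C}"
proof (rule finite_subset)
  show "{card C | C. is_clique W adj C} \<subseteq> card ` Pow W"
    unfolding is_clique_def by auto
qed (use assms in simp)

lemma card_clique_le_clique_number:
  assumes "finite W" "is_clique W adj C"
  shows "card C \<le> clique_number W adj"
  unfolding clique_number_def using assms finite_clique_sizes by (intro Max_ge) auto

lemma max_clique_exists:
  assumes "finite W"
  obtains C where "is_clique W adj C" "card C = clique_number W adj"
proof -
  have "is_clique W adj {}" unfolding is_clique_def by simp
  then have "clique_number W adj \<in> {card C | C. is_clique W adj C}"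
    unfolding clique_number_def using finite_clique_sizes[OF assms] by (intro Max_in) auto
  then show ?thesis using that by force
qed

lemma clique_number_pos:
  assumes "finite W" "x \<in> W"
  shows "0 < clique_number W adj"
proof -
  have "is_clique W adj {x}" using assms(2) unfolding is_clique_def by simp
  then show ?thesis using card_clique_le_clique_number[OF assms(1)] by fastforce
qed

lemma card_clique_le_colours:
  assumes "is_colouring W adj k f" "is_clique W adj C"
  shows "card C \<le> k"
proof -
  have "inj_on f C"
    using assms unfolding is_colouring_def is_clique_def by (meson inj_onI subsetD)
  then have "card C = card (f ` C)" by (simp add: card_image)
  also have "\<dots> \<le> card {..<k}"
    using assms unfolding is_colouring_def is_clique_def by (intro card_mono) auto
  finally show ?thesis by simp
qed

lemma meets_max_cliques_self:
  assumes "finite W" "W \<noteq> {}"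
  shows "meets_max_cliques W adj W"
  unfolding meets_max_cliques_def
proof (intro allI impI)
  fix C assume C: "is_clique W adj C \<and> card C = clique_number W adj"
  obtain x where "x \<in> W" using \<open>W \<noteq> {}\<close> by blast
  then have "0 < card C" using C clique_number_pos[OF \<open>finite W\<close>] by simp
  then have "C \<noteq> {}" by auto
  then show "C \<inter> W \<noteq> {}" using C unfolding is_clique_def by blast
qed

lemma clique_number_Diff_less:
  assumes "finite W" "meets_max_cliques W adj I"
  shows "clique_number (W - I) adj < clique_number W adj"
proof -
  obtain C where C: "is_clique (W - I) adj C" "card C = clique_number (W - I) adj"
    using max_clique_exists \<open>finite W\<close> by blast
  then have "is_clique W adj C" "C \<inter> I = {}" unfolding is_clique_def by auto
  then show ?thesis
    using C(2) assms(2) card_clique_le_clique_number[OF \<open>finite W\<close>]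
    unfolding meets_max_cliques_def by (metis le_neq_implies_less)
qed

lemma is_colouring_mono: "is_colouring W adj k f \<Longrightarrow> k \<le> k' \<Longrightarrow> is_colouring W adj k' f"
  unfolding is_colouring_def by auto

lemma is_colouring_extend_by_independent:
  assumes g: "is_colouring (W - I) adj k g" and "independent adj I"
  shows "is_colouring W adj (Suc k) (\<lambda>x. if x \<in> I then k else g x)"
  unfolding is_colouring_def
proof (intro conjI ballI impI)
  fix x assume "x \<in> W"
  then have "x \<notin> I \<Longrightarrow> g x < k" using g unfolding is_colouring_def by blast
  then show "(if x \<in> I then k else g x) < Suc k" by (simp add: less_SucI)
next
  fix x y assume "x \<in> W" "y \<in> W" "x \<noteq> y \<and> adj x y"
  then show "(if x \<in> I then k else g x) \<noteq> (if y \<in> I then k else g y)"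
    using g \<open>independent adj I\<close> unfolding is_colouring_def independent_def
    by (cases "x \<in> I"; cases "y \<in> I") (auto simp: less_irrefl)
qed

text \<open>Colour a meeting independent set with a new colour: the rest has smaller clique number.\<close>

lemma colouring_with_clique_number:
  assumes "finite V"
    and meets: "\<And>W. W \<subseteq> V \<Longrightarrow> W \<noteq> {} \<Longrightarrow>
      \<exists>I\<subseteq>W. independent adj I \<and> meets_max_cliques W adj I"
    and "W \<subseteq> V"
  shows "\<exists>f. is_colouring W adj (clique_number W adj) f"
  using \<open>W \<subseteq> V\<close>
proof (induction "card W" arbitrary: W rule: less_induct)
  case less
  have "finite W" using less.prems \<open>finite V\<close> by (rule finite_subset)
  show ?case
  proof (cases "W = {}")
    case True
    then show ?thesis unfolding is_colouring_def by simp
  next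
    case False
    then obtain I where I: "independent adj I" "meets_max_cliques W adj I"
      using meets less.prems by blast
    have smaller: "clique_number (W - I) adj < clique_number W adj"
      using clique_number_Diff_less[OF \<open>finite W\<close> I(2)] .
    then have "W - I \<subset> W" by auto
    then have "card (W - I) < card W" using \<open>finite W\<close> by (rule psubset_card_mono[rotated])
    then obtain g where "is_colouring (W - I) adj (clique_number (W - I) adj) g"
      using less.hyps less.prems by blast
    then have "is_colouring W adj (Suc (clique_number (W - I) adj))
        (\<lambda>x. if x \<in> I then clique_number (W - I) adj else g x)"
      using I(1) by (rule is_colouring_extend_by_independent)
    moreover have "Suc (clique_number (W - I) adj) \<le> clique_number W adj" using smaller by simp
    ultimately show ?thesis by (blast intro: is_colouring_mono)
  qed
qed

lemma perfect_graph_if_independent_sets_meet_max_cliques: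
  assumes "finite V"
    and "\<And>W. W \<subseteq> V \<Longrightarrow> W \<noteq> {} \<Longrightarrow>
      \<exists>I\<subseteq>W. independent adj I \<and> meets_max_cliques W adj I"
  shows "perfect_graph V adj"
  unfolding perfect_graph_def
proof (intro conjI allI impI)
  fix W assume "W \<subseteq> V"
  then have "finite W" using \<open>finite V\<close> by (rule finite_subset)
  obtain C where C: "is_clique W adj C" "card C = clique_number W adj"
    using max_clique_exists[OF \<open>finite W\<close>] .
  show "chromatic_number W adj = clique_number W adj"
    unfolding chromatic_number_def
  proof (rule Least_equality)
    show "\<exists>f. is_colouring W adj (clique_number W adj) f"
      using colouring_with_clique_number[OF assms \<open>W \<subseteq> V\<close>] .
  next
    fix k assume "\<exists>f. is_colouring W adj k f"
    then show "clique_number W adj \<le> k" using card_clique_le_colours C by metis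
  qed
qed (rule assms(1))

section \<open>Maximum-weight bipartite matchings\<close>

definition is_matching :: "('r \<times> 'c) set \<Rightarrow> ('r \<times> 'c) set \<Rightarrow> bool" where
  "is_matching E M \<longleftrightarrow> M \<subseteq> E \<and> (\<forall>e\<in>M. \<forall>e'\<in>M. (fst e = fst e') = (snd e = snd e'))"

definition max_weight_matching :: "('r \<times> 'c) set \<Rightarrow> ('r \<times> 'c \<Rightarrow> nat) \<Rightarrow> ('r \<times> 'c) set \<Rightarrow> bool" where
  "max_weight_matching E w M \<longleftrightarrow>
     is_matching E M \<and> (\<forall>M'. is_matching E M' \<longrightarrow> sum w M' \<le> sum w M)"

lemma matching_fst_eq_iff_snd_eq:
  "is_matching E M \<Longrightarrow> (a, b) \<in> M \<Longrightarrow> (a', b') \<in> M \<Longrightarrow> (a = a') = (b = b')"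
  unfolding is_matching_def by fastforce

lemma finite_matching: "finite E \<Longrightarrow> is_matching E M \<Longrightarrow> finite M"
  unfolding is_matching_def by (auto intro: finite_subset)

lemma max_weight_matching_exists:
  assumes "finite E"
  obtains M where "max_weight_matching E w M"
proof -
  have "is_matching E {}" unfolding is_matching_def by simp
  moreover have "sum w M < sum w E + 1" if "is_matching E M" for M
    using that assms unfolding is_matching_def by (simp add: sum_mono2 less_Suc_eq_le)
  ultimately show ?thesis
    using that Lattices_Big.ex_has_greatest_nat[of "is_matching E" "{}" "sum w"]
    unfolding max_weight_matching_def by blast
qed

lemma matching_exchange:
  assumes M: "is_matching E M" and N: "is_matching E N"
    and closed: "\<And>e e'. e \<in> P \<Longrightarrow> e' \<in> sym_diff M N \<Longrightarrow>
      fst e = fst e' \<or> snd e = snd e' \<Longrightarrow> e' \<in> P"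
    and P: "P \<subseteq> sym_diff M N"
  shows "is_matching E ((M - P) \<union> (P \<inter> N))"
proof -
  have mixed: "(fst e = fst e') = (snd e = snd e')" if "e \<in> M - P" "e' \<in> P \<inter> N" for e e'
  proof (cases "e \<in> N")
    case True
    then show ?thesis using N that unfolding is_matching_def by blast
  next
    case False
    then have "\<not> (fst e' = fst e \<or> snd e' = snd e)" using closed[of e' e] that by blast
    then show ?thesis by auto
  qed
  show ?thesis
    unfolding is_matching_def
  proof (intro conjI ballI)
    show "(M - P) \<union> (P \<inter> N) \<subseteq> E" using M N unfolding is_matching_def by blast
  next
    fix e e' assume "e \<in> (M - P) \<union> (P \<inter> N)" "e' \<in> (M - P) \<union> (P \<inter> N)"
    then consider "e \<in> M" "e' \<in> M" | "e \<in> N" "e' \<in> N"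
      | "e \<in> M - P" "e' \<in> P \<inter> N" | "e' \<in> M - P" "e \<in> P \<inter> N"
      by blast
    then show "(fst e = fst e') = (snd e = snd e')"
    proof cases
      case 4
      then show ?thesis using mixed[of e' e] by auto
    qed (use mixed M N in \<open>auto simp: is_matching_def\<close>)
  qed
qed

lemma sum_exchange:
  fixes w :: "'a \<Rightarrow> 'b::comm_monoid_add"
  assumes "finite M" "finite N"
  shows "sum w ((M - P) \<union> (P \<inter> N)) + sum w ((N - P) \<union> (P \<inter> M)) = sum w M + sum w N"
proof -
  have "sum w ((M - P) \<union> (P \<inter> N)) = sum w (M - P) + sum w (N \<inter> P)"
    using assms by (subst sum.union_disjoint) (auto simp: Int_commute)
  moreover have "sum w ((N - P) \<union> (P \<inter> M)) = sum w (N - P) + sum w (M \<inter> P)"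
    using assms by (subst sum.union_disjoint) (auto simp: Int_commute)
  ultimately show ?thesis
    using sum.Int_Diff[OF assms(1), of w P] sum.Int_Diff[OF assms(2), of w P]
    by (simp add: ac_simps)
qed

definition alternating_step :: "('r \<times> 'c) set \<Rightarrow> ('r \<times> 'c) set \<Rightarrow> ('r + 'c) rel" where
  "alternating_step M N =
     {(Inl a, Inr b) | a b. (a, b) \<in> N - M} \<union> {(Inr b, Inl a) | a b. (a, b) \<in> M - N}"

definition alternating_reach :: "('r \<times> 'c) set \<Rightarrow> ('r \<times> 'c) set \<Rightarrow> 'r \<Rightarrow> ('r + 'c) set" where
  "alternating_reach M N i = {v. (Inl i, v) \<in> (alternating_step M N)\<^sup>*}"

text \<open>If M misses row i, these edges form the alternating path of M and N that starts at i.\<close>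

definition alternating_path :: "('r \<times> 'c) set \<Rightarrow> ('r \<times> 'c) set \<Rightarrow> 'r \<Rightarrow> ('r \<times> 'c) set" where
  "alternating_path M N i =
     {e \<in> N - M. Inl (fst e) \<in> alternating_reach M N i} \<union>
     {e \<in> M - N. Inr (snd e) \<in> alternating_reach M N i}"

lemma alternating_reach_step:
  "v \<in> alternating_reach M N i \<Longrightarrow> (v, u) \<in> alternating_step M N \<Longrightarrow> u \<in> alternating_reach M N i"
  unfolding alternating_reach_def by (auto intro: rtrancl_into_rtrancl)

lemma alternating_path_ends:
  assumes "(a, b) \<in> alternating_path M N i"
  shows "Inl a \<in> alternating_reach M N i" "Inr b \<in> alternating_reach M N i"
  using assms alternating_reach_step[of "Inl a" M N i "Inr b"]
    alternating_reach_step[of "Inr b" M N i "Inl a"]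
  unfolding alternating_path_def alternating_step_def by auto

text \<open>Each vertex is entered by at most one edge of either matching, so reachability also
  propagates backwards along the path.\<close>

lemma alternating_reach_back_row:
  assumes N: "is_matching E N" and "(a, b) \<in> N - M" "Inr b \<in> alternating_reach M N i"
  shows "Inl a \<in> alternating_reach M N i"
proof -
  have "(Inl i, Inr b) \<in> (alternating_step M N)\<^sup>*"
    using assms(3) unfolding alternating_reach_def by simp
  then obtain u where "(Inl i, u) \<in> (alternating_step M N)\<^sup>*" "(u, Inr b) \<in> alternating_step M N"
    by (cases rule: rtranclE) auto
  then obtain a' where "(a', b) \<in> N - M" "Inl a' \<in> alternating_reach M N i"
    unfolding alternating_step_def alternating_reach_def by auto
  moreover have "a' = a"
    using matching_fst_eq_iff_snd_eq[OF N, of a' b a b] \<open>(a', b) \<in> N - M\<close> assms(2) by simp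
  ultimately show ?thesis by simp
qed

lemma alternating_reach_back_col:
  assumes M: "is_matching E M" and i: "\<forall>e\<in>M. fst e \<noteq> i"
    and "(a, b) \<in> M - N" "Inl a \<in> alternating_reach M N i"
  shows "Inr b \<in> alternating_reach M N i"
proof -
  have "(Inl i, Inl a) \<in> (alternating_step M N)\<^sup>*"
    using assms(4) unfolding alternating_reach_def by simp
  then show ?thesis
  proof (cases rule: rtranclE)
    case base
    then show ?thesis using i assms(3) by auto
  next
    case (step u)
    then obtain b' where "(a, b') \<in> M - N" "Inr b' \<in> alternating_reach M N i"
      unfolding alternating_step_def alternating_reach_def by auto
    moreover have "b' = b"
      using matching_fst_eq_iff_snd_eq[OF M, of a b' a b] \<open>(a, b') \<in> M - N\<close> assms(3) by simp
    ultimately show ?thesis by simp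
  qed
qed

lemma alternating_path_closed:
  assumes M: "is_matching E M" and N: "is_matching E N" and i: "\<forall>e\<in>M. fst e \<noteq> i"
    and e: "e \<in> alternating_path M N i" and e': "e' \<in> sym_diff M N"
    and shared: "fst e = fst e' \<or> snd e = snd e'"
  shows "e' \<in> alternating_path M N i"
proof -
  obtain a b a' b' where ab: "e = (a, b)" "e' = (a', b')" by fastforce
  have ends: "Inl a \<in> alternating_reach M N i" "Inr b \<in> alternating_reach M N i"
    using alternating_path_ends e ab(1) by auto
  from e' show ?thesis
  proof
    assume "e' \<in> M - N"
    then have "Inr b' \<in> alternating_reach M N i"
      using shared ends ab alternating_reach_back_col[OF M i, of a' b'] by auto
    then show ?thesis using \<open>e' \<in> M - N\<close> ab(2) unfolding alternating_path_def by auto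
  next
    assume "e' \<in> N - M"
    then have "Inl a' \<in> alternating_reach M N i"
      using shared ends ab alternating_reach_back_row[OF N, of a' b'] by auto
    then show ?thesis using \<open>e' \<in> N - M\<close> ab(2) unfolding alternating_path_def by auto
  qed
qed

lemma alternating_reach_avoids_col:
  assumes "\<forall>e\<in>N. snd e \<noteq> j"
  shows "Inr j \<notin> alternating_reach M N i"
proof
  assume "Inr j \<in> alternating_reach M N i"
  then have "(Inl i, Inr j) \<in> (alternating_step M N)\<^sup>*" unfolding alternating_reach_def by simp
  then obtain u where "(u, Inr j) \<in> alternating_step M N" by (cases rule: rtranclE) auto
  then show False using assms unfolding alternating_step_def by auto
qed

lemma matching_exchange_avoiding:
  fixes w :: "'r \<times> 'c \<Rightarrow> nat"
  assumes "finite E" and M: "is_matching E M" and N: "is_matching E N"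
    and i: "\<forall>e\<in>M. fst e \<noteq> i" and j: "\<forall>e\<in>N. snd e \<noteq> j"
  obtains M' N' where "is_matching E M'" "\<forall>e\<in>M'. fst e \<noteq> i \<and> snd e \<noteq> j"
    and "is_matching E N'" "sum w M' + sum w N' = sum w M + sum w N"
proof -
  define P where "P = alternating_path M N i"
  have P_sub: "P \<subseteq> sym_diff M N" "P \<subseteq> sym_diff N M"
    unfolding P_def alternating_path_def by auto
  have closed: "e' \<in> P" if "e \<in> P" "e' \<in> sym_diff M N" "fst e = fst e' \<or> snd e = snd e'"
    for e e'
    using alternating_path_closed[OF M N i] that unfolding P_def by blast
  have closed': "e' \<in> P" if "e \<in> P" "e' \<in> sym_diff N M" "fst e = fst e' \<or> snd e = snd e'"
    for e e'
    using closed[OF that(1) _ that(3)] that(2) by (simp add: Un_commute)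
  define M' where "M' = (N - P) \<union> (P \<inter> M)"
  define N' where "N' = (M - P) \<union> (P \<inter> N)"
  have "is_matching E M'"
    unfolding M'_def using matching_exchange[OF N M closed' P_sub(2)] .
  moreover have "is_matching E N'"
    unfolding N'_def using matching_exchange[OF M N closed P_sub(1)] .
  moreover have "sum w M' + sum w N' = sum w M + sum w N"
    unfolding M'_def N'_def
    using sum_exchange[OF finite_matching[OF \<open>finite E\<close> N] finite_matching[OF \<open>finite E\<close> M], of w P]
    by (simp add: add.commute)
  moreover have "fst e \<noteq> i \<and> snd e \<noteq> j" if e: "e \<in> M'" for e
  proof
    have "Inl i \<in> alternating_reach M N i" unfolding alternating_reach_def by simp
    then show "fst e \<noteq> i" using e i unfolding M'_def P_def alternating_path_def by auto
    show "snd e \<noteq> j"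
      using e j alternating_path_ends[of "fst e" "snd e" M N i] alternating_reach_avoids_col[OF j]
      unfolding M'_def P_def by auto
  qed
  ultimately show ?thesis using that by blast
qed

text \<open>If M missed row i, exchanging along the alternating path would yield a maximum-weight
  matching missing both row i and column j, to which the edge (i, j) could be added.\<close>

lemma max_weight_matching_covers_row:
  fixes w :: "'r \<times> 'c \<Rightarrow> nat"
  assumes "finite E" and ij: "(i, j) \<in> E" "0 < w (i, j)"
    and N: "max_weight_matching E w N" "\<forall>e\<in>N. snd e \<noteq> j"
    and M: "max_weight_matching E w M"
  shows "\<exists>e\<in>M. fst e = i"
proof (rule ccontr)
  assume "\<not> (\<exists>e\<in>M. fst e = i)"
  then have M_avoids: "\<forall>e\<in>M. fst e \<noteq> i" by blast
  have M_matching: "is_matching E M" and N_matching: "is_matching E N"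
    using M N(1) unfolding max_weight_matching_def by simp_all
  obtain M' N' where M': "is_matching E M'" "\<forall>e\<in>M'. fst e \<noteq> i \<and> snd e \<noteq> j"
    and N': "is_matching E N'" "sum w M' + sum w N' = sum w M + sum w N"
    by (rule matching_exchange_avoiding[OF \<open>finite E\<close> M_matching N_matching M_avoids N(2)])
  have "sum w M' \<le> sum w M" "sum w N' \<le> sum w N"
    using M N(1) M'(1) N'(1) unfolding max_weight_matching_def by simp_all
  then have "sum w M' = sum w M" using N'(2) by linarith
  have "is_matching E (insert (i, j) M')"
    using M' ij unfolding is_matching_def by auto
  then have "sum w (insert (i, j) M') \<le> sum w M"
    using M unfolding max_weight_matching_def by blast
  moreover have "(i, j) \<notin> M'" using M'(2) by auto
  then have "sum w (insert (i, j) M') = w (i, j) + sum w M'"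
    using finite_matching[OF \<open>finite E\<close> M'(1)] by simp
  ultimately show False using \<open>sum w M' = sum w M\<close> \<open>0 < w (i, j)\<close> by linarith
qed

lemma star_meets_max_weight_matchings:
  fixes w :: "'r \<times> 'c \<Rightarrow> nat"
  assumes "finite E" "E \<noteq> {}" and pos: "\<forall>e\<in>E. 0 < w e"
  obtains S where "S \<subseteq> E" "\<forall>e\<in>S. \<forall>e'\<in>S. fst e = fst e' \<or> snd e = snd e'"
    "\<And>M. max_weight_matching E w M \<Longrightarrow> M \<inter> S \<noteq> {}"
proof -
  obtain i j where ij: "(i, j) \<in> E" using \<open>E \<noteq> {}\<close> by auto
  have subset: "M \<subseteq> E" if "max_weight_matching E w M" for M
    using that unfolding max_weight_matching_def is_matching_def by simp
  show ?thesis
  proof (cases "\<exists>N. max_weight_matching E w N \<and> (\<forall>e\<in>N. snd e \<noteq> j)")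
    case True
    then obtain N where N: "max_weight_matching E w N" "\<forall>e\<in>N. snd e \<noteq> j" by blast
    have "M \<inter> {e \<in> E. fst e = i} \<noteq> {}" if "max_weight_matching E w M" for M
    proof -
      have "\<exists>e\<in>M. fst e = i"
        using max_weight_matching_covers_row[OF \<open>finite E\<close> ij pos[rule_format, OF ij] N that] .
      then show ?thesis using subset[OF that] by blast
    qed
    then show ?thesis by (intro that[of "{e \<in> E. fst e = i}"]) auto
  next
    case False
    have "M \<inter> {e \<in> E. snd e = j} \<noteq> {}" if "max_weight_matching E w M" for M
    proof -
      have "\<exists>e\<in>M. snd e = j" using False that by blast
      then show ?thesis using subset[OF that] by blast
    qed
    then show ?thesis by (intro that[of "{e \<in> E. snd e = j}"]) auto
  qed
qed

section \<open>Grids of cells\<close>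

text \<open>Within a cell the adjacency is arbitrary. Cliques correspond to matchings of occupied
  cells, weighted with the clique numbers of the cells.\<close>

locale grid =
  fixes W :: "'a set" and adj :: "'a \<Rightarrow> 'a \<Rightarrow> bool"
    and row :: "'a \<Rightarrow> 'r" and col :: "'a \<Rightarrow> 'c"
  assumes finite_W: "finite W"
    and adj_if_row_col_differ:
      "\<And>x y. x \<in> W \<Longrightarrow> y \<in> W \<Longrightarrow> row x \<noteq> row y \<Longrightarrow> col x \<noteq> col y \<Longrightarrow> adj x y"
    and not_adj_if_one_line_shared:
      "\<And>x y. x \<in> W \<Longrightarrow> y \<in> W \<Longrightarrow> (row x = row y) \<noteq> (col x = col y) \<Longrightarrow> \<not> adj x y"
begin

definition position :: "'a \<Rightarrow> 'r \<times> 'c" where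
  "position x = (row x, col x)"

definition cell :: "'r \<times> 'c \<Rightarrow> 'a set" where
  "cell e = {x \<in> W. position x = e}"

definition cell_weight :: "'r \<times> 'c \<Rightarrow> nat" where
  "cell_weight e = clique_number (cell e) adj"

lemma mem_cell: "x \<in> cell e \<longleftrightarrow> x \<in> W \<and> position x = e"
  unfolding cell_def by simp

lemma cell_subset: "cell e \<subseteq> W"
  unfolding cell_def by auto

lemma finite_cell: "finite (cell e)"
  using finite_W cell_subset by (rule finite_subset[rotated])

lemma cell_weight_pos:
  assumes "e \<in> position ` W"
  shows "0 < cell_weight e"
proof -
  obtain x where "x \<in> W" "e = position x" using assms by blast
  then have "x \<in> cell e" by (simp add: mem_cell)
  then show ?thesis unfolding cell_weight_def by (rule clique_number_pos[OF finite_cell])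
qed

lemma card_UN_cells:
  assumes "finite M" "\<And>e. e \<in> M \<Longrightarrow> A e \<subseteq> cell e"
  shows "card (\<Union>e\<in>M. A e) = (\<Sum>e\<in>M. card (A e))"
proof (rule card_UN_disjoint)
  show "\<forall>e\<in>M. finite (A e)" using assms(2) finite_cell by (blast intro: finite_subset)
  show "\<forall>e\<in>M. \<forall>e'\<in>M. e \<noteq> e' \<longrightarrow> A e \<inter> A e' = {}" using assms(2) unfolding cell_def by blast
qed (rule assms(1))

lemma card_eq_sum_cells:
  assumes "C \<subseteq> W"
  shows "card C = (\<Sum>e\<in>position ` C. card (C \<inter> cell e))"
proof -
  have "finite (position ` C)" using finite_subset[OF assms finite_W] by simp
  have "C = (\<Union>e\<in>position ` C. C \<inter> cell e)" using assms by (auto simp: mem_cell)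
  then have "card C = card (\<Union>e\<in>position ` C. C \<inter> cell e)" by (rule arg_cong)
  also have "\<dots> = (\<Sum>e\<in>position ` C. card (C \<inter> cell e))"
    by (rule card_UN_cells[OF \<open>finite (position ` C)\<close>]) simp
  finally show ?thesis .
qed

lemma positions_of_clique_matching:
  assumes "is_clique W adj C"
  shows "is_matching (position ` W) (position ` C)"
proof -
  have "(row x = row y) = (col x = col y)" if "x \<in> C" "y \<in> C" for x y
  proof (cases "x = y")
    case False
    then show ?thesis
      using assms that not_adj_if_one_line_shared unfolding is_clique_def by blast
  qed simp
  then show ?thesis
    using assms unfolding is_matching_def is_clique_def position_def by auto
qed

lemma card_clique_cell_le: "is_clique W adj C \<Longrightarrow> card (C \<inter> cell e) \<le> cell_weight e"
  unfolding cell_weight_def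
  by (rule card_clique_le_clique_number[OF finite_cell]) (auto simp: is_clique_def)

lemma card_clique_le_weight:
  assumes "is_clique W adj C"
  shows "card C \<le> sum cell_weight (position ` C)"
proof -
  have "C \<subseteq> W" using assms unfolding is_clique_def by simp
  then show ?thesis
    unfolding card_eq_sum_cells[OF \<open>C \<subseteq> W\<close>]
    using card_clique_cell_le[OF assms] by (intro sum_mono)
qed

lemma clique_of_matching:
  assumes M: "is_matching (position ` W) M"
  obtains C where "is_clique W adj C" "card C = sum cell_weight M"
proof -
  have "\<exists>K. is_clique (cell e) adj K \<and> card K = cell_weight e" for e
    unfolding cell_weight_def using max_clique_exists[OF finite_cell] by metis
  then obtain K where K: "\<And>e. is_clique (cell e) adj (K e)" "\<And>e. card (K e) = cell_weight e"
    by metis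
  have K_cell: "K e \<subseteq> cell e" for e using K(1) unfolding is_clique_def by simp
  have "finite M"
    using M finite_W unfolding is_matching_def by (meson finite_imageI finite_subset)
  have "is_clique W adj (\<Union>e\<in>M. K e)"
    unfolding is_clique_def
  proof (intro conjI ballI impI)
    show "(\<Union>e\<in>M. K e) \<subseteq> W" using K_cell cell_subset by blast
  next
    fix x y assume "x \<in> (\<Union>e\<in>M. K e)" "y \<in> (\<Union>e\<in>M. K e)" "x \<noteq> y"
    then obtain e e' where e: "e \<in> M" "x \<in> K e" "e' \<in> M" "y \<in> K e'" by blast
    show "adj x y"
    proof (cases "e = e'")
      case True
      then show ?thesis using K(1) e \<open>x \<noteq> y\<close> unfolding is_clique_def by blast
    next
      case False
      have "x \<in> cell e" "y \<in> cell e'" using K_cell e by blast+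
      then have "x \<in> W" "y \<in> W" "position x = e" "position y = e'" by (simp_all add: mem_cell)
      moreover have "fst e \<noteq> fst e'" "snd e \<noteq> snd e'"
        using M e(1,3) False unfolding is_matching_def by (metis prod.expand)+
      ultimately show ?thesis using adj_if_row_col_differ unfolding position_def by auto
    qed
  qed
  moreover have "card (\<Union>e\<in>M. K e) = sum cell_weight M"
    using card_UN_cells[OF \<open>finite M\<close> K_cell] K(2) by simp
  ultimately show ?thesis using that by blast
qed

lemma max_clique_structure:
  assumes C: "is_clique W adj C" "card C = clique_number W adj"
  shows "max_weight_matching (position ` W) cell_weight (position ` C)"
    and "\<And>e. e \<in> position ` C \<Longrightarrow> card (C \<inter> cell e) = cell_weight e"
proof -
  obtain M where M: "max_weight_matching (position ` W) cell_weight M"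
    using max_weight_matching_exists finite_W by blast
  obtain C' where "is_clique W adj C'" "card C' = sum cell_weight M"
    using clique_of_matching M unfolding max_weight_matching_def by blast
  then have "sum cell_weight M \<le> card C"
    using C card_clique_le_clique_number[OF finite_W] by metis
  moreover have "sum cell_weight (position ` C) \<le> sum cell_weight M"
    using M positions_of_clique_matching[OF C(1)] unfolding max_weight_matching_def by blast
  ultimately have sums_eq: "sum cell_weight (position ` C) = card C"
    using card_clique_le_weight[OF C(1)] by linarith
  then show "max_weight_matching (position ` W) cell_weight (position ` C)"
    using M \<open>sum cell_weight M \<le> card C\<close> positions_of_clique_matching[OF C(1)]
    unfolding max_weight_matching_def by fastforce
  have "C \<subseteq> W" using C(1) unfolding is_clique_def by simp
  then have "finite (position ` C)" using finite_subset finite_W by blast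
  have sums_eq': "(\<Sum>e\<in>position ` C. card (C \<inter> cell e)) = sum cell_weight (position ` C)"
    using card_eq_sum_cells[OF \<open>C \<subseteq> W\<close>] sums_eq by simp
  show "card (C \<inter> cell e) = cell_weight e" if "e \<in> position ` C" for e
    by (rule sum_mono_inv[OF sums_eq' card_clique_cell_le[OF C(1)] that \<open>finite (position ` C)\<close>])
qed

lemma independent_UN_line:
  assumes line: "\<forall>e\<in>S. \<forall>e'\<in>S. fst e = fst e' \<or> snd e = snd e'"
    and J: "\<And>e. e \<in> S \<Longrightarrow> J e \<subseteq> cell e" "\<And>e. e \<in> S \<Longrightarrow> independent adj (J e)"
  shows "independent adj (\<Union>e\<in>S. J e)"
  unfolding independent_def
proof (intro ballI)
  fix x y assume "x \<in> (\<Union>e\<in>S. J e)" "y \<in> (\<Union>e\<in>S. J e)"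
  then obtain e e' where e: "e \<in> S" "x \<in> J e" "e' \<in> S" "y \<in> J e'" by blast
  show "\<not> adj x y"
  proof (cases "e = e'")
    case True
    then show ?thesis using J(2) e unfolding independent_def by blast
  next
    case False
    have "x \<in> cell e" "y \<in> cell e'" using J(1) e by blast+
    then have "x \<in> W" "y \<in> W" "position x = e" "position y = e'" by (simp_all add: mem_cell)
    moreover have "(fst e = fst e') \<noteq> (snd e = snd e')"
      using line e(1,3) False by (auto simp: prod_eq_iff)
    ultimately show ?thesis using not_adj_if_one_line_shared unfolding position_def by auto
  qed
qed

text \<open>Some line of cells meets every maximum-weight matching, hence every maximum clique;
  the independent sets of its cells combine.\<close>

lemma meets_max_cliques_if_cells_do:
  assumes "W \<noteq> {}"
    and cells: "\<And>e. e \<in> position ` W \<Longrightarrow>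
      \<exists>I\<subseteq>cell e. independent adj I \<and> meets_max_cliques (cell e) adj I"
  shows "\<exists>I\<subseteq>W. independent adj I \<and> meets_max_cliques W adj I"
proof -
  have "finite (position ` W)" "position ` W \<noteq> {}" "\<forall>e\<in>position ` W. 0 < cell_weight e"
    using finite_W \<open>W \<noteq> {}\<close> cell_weight_pos by auto
  then obtain S where S: "S \<subseteq> position ` W" "\<forall>e\<in>S. \<forall>e'\<in>S. fst e = fst e' \<or> snd e = snd e'"
    "\<And>M. max_weight_matching (position ` W) cell_weight M \<Longrightarrow> M \<inter> S \<noteq> {}"
    by (rule star_meets_max_weight_matchings) (rule that)
  obtain J where J: "\<And>e. e \<in> S \<Longrightarrow> J e \<subseteq> cell e"
    "\<And>e. e \<in> S \<Longrightarrow> independent adj (J e)" "\<And>e. e \<in> S \<Longrightarrow> meets_max_cliques (cell e) adj (J e)"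
    using cells S(1) by (metis subsetD)
  define I where "I = (\<Union>e\<in>S. J e)"
  have "I \<subseteq> W" unfolding I_def using J(1) cell_subset by blast
  moreover have "independent adj I"
    unfolding I_def using S(2) J(1,2) by (rule independent_UN_line)
  moreover have "C \<inter> I \<noteq> {}"
    if C: "is_clique W adj C" "card C = clique_number W adj" for C
  proof -
    obtain e where e: "e \<in> position ` C" "e \<in> S"
      using S(3)[OF max_clique_structure(1)[OF C]] by blast
    have "is_clique (cell e) adj (C \<inter> cell e)" using C(1) unfolding is_clique_def by auto
    moreover have "card (C \<inter> cell e) = clique_number (cell e) adj"
      using max_clique_structure(2)[OF C e(1)] unfolding cell_weight_def .
    ultimately have "C \<inter> cell e \<inter> J e \<noteq> {}"
      using J(3)[OF e(2)] unfolding meets_max_cliques_def by blast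
    then show ?thesis unfolding I_def using e(2) by blast
  qed
  ultimately show ?thesis unfolding meets_max_cliques_def by blast
qed

end

section \<open>Agreement graphs of two ultrametrics\<close>

definition agreement :: "('a \<Rightarrow> 'a \<Rightarrow> real) \<Rightarrow> ('a \<Rightarrow> 'a \<Rightarrow> real) \<Rightarrow> 'a \<Rightarrow> 'a \<Rightarrow> bool" where
  "agreement d1 d2 x y \<longleftrightarrow> x \<noteq> y \<and> d1 x y = d2 x y"

text \<open>The centre is put into the ball explicitly because d need not vanish on the diagonal.\<close>

definition strict_ball :: "('a \<Rightarrow> 'a \<Rightarrow> real) \<Rightarrow> 'a set \<Rightarrow> real \<Rightarrow> 'a \<Rightarrow> 'a set" where
  "strict_ball d A t x = {z \<in> A. z = x \<or> d x z < t}"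

lemma strict_ball_eq_iff:
  assumes d: "ultrametric_on A d" and "x \<in> A" "y \<in> A"
  shows "strict_ball d A t x = strict_ball d A t y \<longleftrightarrow> x = y \<or> d x y < t"
proof
  assume "strict_ball d A t x = strict_ball d A t y"
  then have "y \<in> strict_ball d A t x" using \<open>y \<in> A\<close> unfolding strict_ball_def by blast
  then show "x = y \<or> d x y < t" unfolding strict_ball_def by auto
next
  have ball_sub: "strict_ball d A t a \<subseteq> strict_ball d A t b"
    if "a \<in> A" "b \<in> A" "d a b < t" for a b
  proof
    fix z assume z: "z \<in> strict_ball d A t a"
    have "d b a < t" using d that unfolding ultrametric_on_def by metis
    moreover have "d b z \<le> max (d b a) (d a z)"
      using d that z unfolding ultrametric_on_def strict_ball_def by blast
    ultimately show "z \<in> strict_ball d A t b" using z unfolding strict_ball_def by auto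
  qed
  assume "x = y \<or> d x y < t"
  moreover have "d x y < t \<Longrightarrow> d y x < t"
    using d \<open>x \<in> A\<close> \<open>y \<in> A\<close> unfolding ultrametric_on_def by metis
  ultimately show "strict_ball d A t x = strict_ball d A t y"
    using ball_sub \<open>x \<in> A\<close> \<open>y \<in> A\<close> by blast
qed

lemma ex_max_on_distinct_pairs:
  fixes f :: "'a \<Rightarrow> 'a \<Rightarrow> real"
  assumes "finite W" "x \<in> W" "y \<in> W" "x \<noteq> y"
  obtains x0 y0 where "x0 \<in> W" "y0 \<in> W" "x0 \<noteq> y0"
    "\<And>x y. x \<in> W \<Longrightarrow> y \<in> W \<Longrightarrow> x \<noteq> y \<Longrightarrow> f x y \<le> f x0 y0"
proof -
  define P where "P = {(x, y) \<in> W \<times> W. x \<noteq> y}"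
  have "finite P" using \<open>finite W\<close> unfolding P_def by (auto intro: finite_subset)
  have "(x, y) \<in> P" using assms unfolding P_def by simp
  then have "Max (case_prod f ` P) \<in> case_prod f ` P"
    using \<open>finite P\<close> by (intro Max_in) auto
  then obtain x0 y0 where "(x0, y0) \<in> P" "f x0 y0 = Max (case_prod f ` P)" by auto
  moreover have "f x y \<le> Max (case_prod f ` P)" if "(x, y) \<in> P" for x y
    using \<open>finite P\<close> that by (intro Max_ge) force+
  ultimately show ?thesis using that unfolding P_def by auto
qed

text \<open>Pairs in distinct rows and columns have d1 = d2 = t; pairs sharing exactly one line
  have exactly one distance below t.\<close>

lemma agreement_grid:
  assumes d1: "ultrametric_on L d1" and d2: "ultrametric_on L d2" and "W \<subseteq> L" "finite W"
    and le_t: "\<And>x y. x \<in> W \<Longrightarrow> y \<in> W \<Longrightarrow> x \<noteq> y \<Longrightarrow> max (d1 x y) (d2 x y) \<le> t"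
  shows "grid W (agreement d1 d2) (strict_ball d1 L t) (strict_ball d2 L t)"
proof
  fix x y assume "x \<in> W" "y \<in> W"
  then have "x \<in> L" "y \<in> L" using \<open>W \<subseteq> L\<close> by auto
  note row_eq = strict_ball_eq_iff[OF d1 \<open>x \<in> L\<close> \<open>y \<in> L\<close>, of t]
    and col_eq = strict_ball_eq_iff[OF d2 \<open>x \<in> L\<close> \<open>y \<in> L\<close>, of t]
  show "agreement d1 d2 x y"
    if "strict_ball d1 L t x \<noteq> strict_ball d1 L t y" "strict_ball d2 L t x \<noteq> strict_ball d2 L t y"
  proof -
    have "x \<noteq> y" "t \<le> d1 x y" "t \<le> d2 x y" using that row_eq col_eq by auto
    then show ?thesis
      using le_t[OF \<open>x \<in> W\<close> \<open>y \<in> W\<close>] unfolding agreement_def by fastforce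
  qed
  show "\<not> agreement d1 d2 x y"
    if "(strict_ball d1 L t x = strict_ball d1 L t y) \<noteq>
      (strict_ball d2 L t x = strict_ball d2 L t y)"
  proof -
    have "x \<noteq> y" "(d1 x y < t) \<noteq> (d2 x y < t)" using that row_eq col_eq by auto
    then show ?thesis unfolding agreement_def by auto
  qed
qed (rule \<open>finite W\<close>)

text \<open>Induction on W: with t the largest distance on W, the two points attaining it lie in
  different cells, so every cell is smaller than W.\<close>

lemma agreement_meets_max_cliques:
  assumes "finite L" and d1: "ultrametric_on L d1" and d2: "ultrametric_on L d2"
    and "W \<subseteq> L" "W \<noteq> {}"
  shows "\<exists>I\<subseteq>W. independent (agreement d1 d2) I \<and> meets_max_cliques W (agreement d1 d2) I"
  using \<open>W \<subseteq> L\<close> \<open>W \<noteq> {}\<close>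
proof (induction "card W" arbitrary: W rule: less_induct)
  case less
  have "finite W" using less.prems(1) \<open>finite L\<close> by (rule finite_subset)
  show ?case
  proof (cases "\<exists>x\<in>W. \<exists>y\<in>W. x \<noteq> y")
    case False
    then have "independent (agreement d1 d2) W"
      unfolding independent_def agreement_def by blast
    then show ?thesis using meets_max_cliques_self[OF \<open>finite W\<close> less.prems(2)] by blast
  next
    case True
    then obtain x0 y0 where xy0: "x0 \<in> W" "y0 \<in> W" "x0 \<noteq> y0"
      and le_t: "\<And>x y. x \<in> W \<Longrightarrow> y \<in> W \<Longrightarrow> x \<noteq> y \<Longrightarrow>
        max (d1 x y) (d2 x y) \<le> max (d1 x0 y0) (d2 x0 y0)"
      using ex_max_on_distinct_pairs[OF \<open>finite W\<close>, of _ _ "\<lambda>x y. max (d1 x y) (d2 x y)"] by metis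
    define t where "t = max (d1 x0 y0) (d2 x0 y0)"
    interpret G: grid W "agreement d1 d2" "strict_ball d1 L t" "strict_ball d2 L t"
      using agreement_grid[OF d1 d2 less.prems(1) \<open>finite W\<close>] le_t unfolding t_def by blast
    have "G.position x0 \<noteq> G.position y0"
    proof
      have "x0 \<in> L" "y0 \<in> L" using xy0 less.prems(1) by auto
      assume "G.position x0 = G.position y0"
      then have "strict_ball d1 L t x0 = strict_ball d1 L t y0"
        "strict_ball d2 L t x0 = strict_ball d2 L t y0"
        by (simp_all add: G.position_def)
      then have "d1 x0 y0 < t" "d2 x0 y0 < t"
        using xy0(3) strict_ball_eq_iff[OF d1 \<open>x0 \<in> L\<close> \<open>y0 \<in> L\<close>]
          strict_ball_eq_iff[OF d2 \<open>x0 \<in> L\<close> \<open>y0 \<in> L\<close>] by blast+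
      then show False unfolding t_def by (simp add: max_def split: if_splits)
    qed
    have "\<exists>I\<subseteq>G.cell e. independent (agreement d1 d2) I \<and>
        meets_max_cliques (G.cell e) (agreement d1 d2) I"
      if "e \<in> G.position ` W" for e
    proof (rule less.hyps)
      have "\<not> (x0 \<in> G.cell e \<and> y0 \<in> G.cell e)"
        using \<open>G.position x0 \<noteq> G.position y0\<close> by (auto simp: G.mem_cell)
      then have "G.cell e \<subset> W" using G.cell_subset xy0 by blast
      then show "card (G.cell e) < card W" using \<open>finite W\<close> by (rule psubset_card_mono[rotated])
      show "G.cell e \<subseteq> L" using G.cell_subset less.prems(1) by blast
      show "G.cell e \<noteq> {}" using that G.mem_cell by blast
    qed
    then show ?thesis using G.meets_max_cliques_if_cells_do less.prems(2) by blast
  qed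
qed

lemma agreement_graph_perfect:
  assumes "finite L" "ultrametric_on L d1" "ultrametric_on L d2"
  shows "perfect_graph L (agreement d1 d2)"
  using assms
  by (intro perfect_graph_if_independent_sets_meet_max_cliques agreement_meets_max_cliques)

theorem proposition4:
  assumes "relaxed_scenario VT ET rT VS ES rS \<sigma> \<mu> \<tau>T \<tau>S"
  shows "perfect_graph (leaves VT ET) (edt_adj VT ET VS ES \<sigma> \<tau>T \<tau>S)"
proof -
  have T: "planted_phylo_tree VT ET rT" "time_map VT ET \<tau>T"
    and S: "planted_phylo_tree VS ES rS" "time_map VS ES \<tau>S"
    and \<sigma>: "\<sigma> ` leaves VT ET \<subseteq> leaves VS ES"
    using assms unfolding relaxed_scenario_def by auto
  have leaves_sub: "leaves VT ET \<subseteq> VT" "leaves VS ES \<subseteq> VS" unfolding leaves_def by auto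
  have "finite (leaves VT ET)"
    using T(1) leaves_sub(1) unfolding planted_phylo_tree_def by (auto intro: finite_subset)
  moreover have "ultrametric_on (leaves VT ET) (\<lambda>x y. \<tau>T (lca VT ET x y))"
    using ultrametric_on_compose[OF time_lca_ultrametric[OF T], where f="\<lambda>x. x"] leaves_sub(1)
    by simp
  moreover have "ultrametric_on (leaves VT ET) (\<lambda>x y. \<tau>S (lca VS ES (\<sigma> x) (\<sigma> y)))"
    using subset_trans[OF \<sigma> leaves_sub(2)]
    by (rule ultrametric_on_compose[OF time_lca_ultrametric[OF S]])
  ultimately have "perfect_graph (leaves VT ET)
      (agreement (\<lambda>x y. \<tau>T (lca VT ET x y)) (\<lambda>x y. \<tau>S (lca VS ES (\<sigma> x) (\<sigma> y))))"
    by (rule agreement_graph_perfect)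
  moreover have "edt_adj VT ET VS ES \<sigma> \<tau>T \<tau>S =
      agreement (\<lambda>x y. \<tau>T (lca VT ET x y)) (\<lambda>x y. \<tau>S (lca VS ES (\<sigma> x) (\<sigma> y)))"
    by (simp add: fun_eq_iff edt_adj_def agreement_def)
  ultimately show ?thesis by simp
qed

end
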